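(* Let $\mathbf X\in\mathbb R^{N\times d}$ (rows $x_1^T,\dots,x_N^T$) with $\mathbf X^T\mathbf X=\mathbf V\mathbf S\mathbf V^T$ positive definite, $\mathbf S=\mathrm{diag}(s_1,\dots,s_d)$, $s_{\min}=\min_i s_i$, and let $\mathbf y\in\mathbb R^N$. Let $0<\eta\le1/\|\mathbf X^T\mathbf X\|_{\mathrm{op}}$ and define the gradient descent iterates $w_0=0$, $w_t=w_{t-1}+\eta\mathbf X^T(\mathbf y-\mathbf Xw_{t-1})$, so $w_t=\mathbf V\mathbf S^{-1}(\mathbf I-(\mathbf I-\eta\mathbf S)^t)\mathbf V^T\mathbf X^T\mathbf y$. For $\lambda=\frac1{t\eta}$ let $\widetilde w_\lambda=(\mathbf X^T\mathbf X+\lambda\mathbf I)^{-1}\mathbf X^T\mathbf y$. Let $f_t(x)=w_t^Tx$, $\widetilde f_\lambda(x)=\widetilde w_\lambda^Tx$, and $c(t,\eta)=\min\big(0.25,\frac1{s_{\min}^2t^2\eta^2}\big)$. Then $$\sum_{i=1}^N(f_t(x_i)-\widetilde f_\lambda(x_i))^2\le c(t,\eta)\sum_{i=1}^N f_t(x_i)^2,$$ and, for a distribution $\mathcal D_{\mathcal X}$ on $\mathbb R^d$ with positive definite second-moment matrix $\Sigma=\mathbb E_{x\sim\mathcal D_{\mathcal X}}[xx^T]$ of condition number $\kappa$, $$\mathbb E_{x\sim\mathcal D_{\mathcal X}}\big[(f_t(x)-\widetilde f_\lambda(x))^2\big]\le\kappa\, c(t,\eta)\,\mathbb E_{x\sim\mathcal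 D_{\mathcal X}}\big[f_t(x)^2\big].$$
   Context: $t\ge1$ is an integer. $\|\cdot\|_{\mathrm{op}}$ is the operator norm; $\kappa$ is the ratio of largest to smallest eigenvalue of $\Sigma$. *)

theory Defs
  imports "HOL-Analysis.Analysis" "HOL-Probability.Probability"
begin

definition diag_mat :: "(real ^ 'd) \<Rightarrow> real ^ 'd ^ 'd" where
  "diag_mat s = (\<chi> i j. if i = j then s $ i else 0)"

definition pos_def :: "real ^ 'd ^ 'd \<Rightarrow> bool" where
  "pos_def A \<longleftrightarrow> (\<forall>v. v \<noteq> 0 \<longrightarrow> v \<bullet> (A *v v) > 0)"

definition mat_eigenvalues :: "real ^ 'd ^ 'd \<Rightarrow> real set" where
  "mat_eigenvalues A = {\<mu>. \<exists>v. v \<noteq> 0 \<and> A *v v = \<mu> *\<^sub>R v}"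

definition cond_number :: "real ^ 'd ^ 'd \<Rightarrow> real" where
  "cond_number A = Max (mat_eigenvalues A) / Min (mat_eigenvalues A)"

fun gd_iter :: "real ^ 'd ^ 'n \<Rightarrow> real ^ 'n \<Rightarrow> real \<Rightarrow> nat \<Rightarrow> real ^ 'd" where
  "gd_iter X y \<eta> 0 = 0"
| "gd_iter X y \<eta> (Suc t) =
     gd_iter X y \<eta> t + \<eta> *\<^sub>R (transpose X *v (y - X *v gd_iter X y \<eta> t))"

definition ridge :: "real ^ 'd ^ 'n \<Rightarrow> real ^ 'n \<Rightarrow> real \<Rightarrow> real ^ 'd" where
  "ridge X y lam = matrix_inv (transpose X ** X + lam *\<^sub>R mat 1) *v (transpose X *v y)"

end

(* Diagonalising X^T X = V S V^T, both estimators act coordinatewise on the eigen-coordinates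
   b_j of X^T y: gradient descent multiplies b_j / s_j by p = 1 - (1 - eta s_j)^t, ridge regression
   with lambda = 1 / (t eta) by a / (1 + a), where a = t eta s_j.  Bernoulli's inequality squeezes p
   between a / (1 + a) and min 1 a, so the two coordinates differ by at most min (1/2) (1/a) times
   the gradient-descent one.  Summing with weights s_j gives the in-sample bound.  Summing with unit
   weights bounds |w - w'|^2 by c |w|^2, and the extreme eigenvalues of Sigma (which exist as the
   extrema of its Rayleigh quotient) turn this into the population bound. *)

theory Submission imports Defs begin

declare transpose_matrix_vector [simp del]

lemma diag_mat_mult_vec: "diag_mat s *v z = (\<chi> j. s$j * z$j)"
  by (simp add: diag_mat_def matrix_vector_mult_def vec_eq_iff if_distrib if_distribR cong: if_cong)

lemma diag_mat_one: "diag_mat (\<chi> _. 1) = mat 1"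
  by (simp add: diag_mat_def mat_def vec_eq_iff)

lemma inner_transpose_mult_vec: "(u::real^'m) \<bullet> (transpose A *v v) = (A *v u) \<bullet> v"
  by (metis dot_lmul_matrix inner_commute transpose_matrix_vector)

lemma sum_sq_inner_rows: "(\<Sum>i\<in>UNIV. (w \<bullet> X $ i)\<^sup>2) = w \<bullet> ((transpose X ** X) *v (w::real^'d))"
proof -
  have "w \<bullet> ((transpose X ** X) *v w) = (X *v w) \<bullet> (X *v w)"
    by (simp add: inner_transpose_mult_vec matrix_vector_mul_assoc[symmetric])
  also have "\<dots> = (\<Sum>i\<in>UNIV. (w \<bullet> X $ i)\<^sup>2)"
    by (simp add: inner_vec_def matrix_vector_mul_component power2_eq_square mult.commute)
  finally show ?thesis by simp
qed

lemma mat_add_scaleR_one_mult_vec: "((A::real^'d^'d) + l *\<^sub>R mat 1) *v v = A *v v + l *\<^sub>R v"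
proof -
  have "(l *\<^sub>R mat 1) *v v = l *\<^sub>R v"
    by (simp add: vec_eq_iff matrix_vector_mult_def mat_def if_distrib if_distribR cong: if_cong)
  then show ?thesis
    by (simp add: matrix_vector_mult_add_rdistrib)
qed

lemma matrix_mul_matrix_inv: "invertible A \<Longrightarrow> A ** matrix_inv A = mat 1"
  unfolding invertible_def matrix_inv_def by (rule conjunct1[OF someI_ex])

subsection \<open>Matrices diagonalised by an orthogonal matrix\<close>

lemma diagonalised_quadratic_form:
  "w \<bullet> ((V ** diag_mat s ** transpose V) *v w) = (\<Sum>j\<in>UNIV. s$j * ((transpose V *v w)$j)\<^sup>2)"
proof -
  have "w \<bullet> ((V ** diag_mat s ** transpose V) *v w)
      = w \<bullet> (transpose (transpose V) *v (diag_mat s *v (transpose V *v w)))"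
    by (simp add: matrix_vector_mul_assoc matrix_mul_assoc)
  also have "\<dots> = (transpose V *v w) \<bullet> (diag_mat s *v (transpose V *v w))"
    by (rule inner_transpose_mult_vec)
  finally show ?thesis by (simp add: inner_vec_def diag_mat_mult_vec power2_eq_square mult_ac)
qed

lemma diagonalised_quadratic_form_mono:
  assumes "\<And>j. 0 \<le> s$j"
    and "\<And>j. ((transpose V *v u)$j)\<^sup>2 \<le> c * ((transpose V *v w)$j)\<^sup>2"
  shows "u \<bullet> ((V ** diag_mat s ** transpose V) *v u) \<le> c * (w \<bullet> ((V ** diag_mat s ** transpose V) *v w))"
  unfolding diagonalised_quadratic_form sum_distrib_left
  using assms by (intro sum_mono) (metis mult.left_commute mult_left_mono)

lemma orthogonal_norm_sq_mono:
  assumes "orthogonal_matrix V"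
    and "\<And>j. ((transpose V *v u)$j)\<^sup>2 \<le> c * ((transpose V *v w)$j)\<^sup>2"
  shows "u \<bullet> u \<le> c * (w \<bullet> w)"
proof -
  have "V ** diag_mat (\<chi> _. 1) ** transpose V = mat 1"
    using assms(1) by (simp add: diag_mat_one orthogonal_matrix_def)
  then show ?thesis
    using diagonalised_quadratic_form_mono[of "\<chi> _. 1" V u c w] assms(2) by simp
qed

lemma orthogonal_transpose_diagonalised:
  assumes "orthogonal_matrix V"
  shows "transpose V *v ((V ** diag_mat s ** transpose V) *v u) = diag_mat s *v (transpose V *v u)"
  using assms by (simp add: matrix_vector_mul_assoc matrix_mul_assoc orthogonal_matrix_def)

lemma diagonalised_eigenvector:
  assumes "orthogonal_matrix V"
  shows "(V ** diag_mat s ** transpose V) *v (V *v axis j 1) = s$j *\<^sub>R (V *v axis j 1)"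
    and "norm (V *v axis j 1) = 1"
proof -
  have "transpose V *v (V *v axis j 1) = axis j 1"
    using assms by (simp add: matrix_vector_mul_assoc orthogonal_matrix_def)
  moreover have "diag_mat s *v axis j 1 = s$j *\<^sub>R axis j (1::real)"
    by (simp add: diag_mat_mult_vec vec_eq_iff axis_def)
  ultimately show "(V ** diag_mat s ** transpose V) *v (V *v axis j 1) = s$j *\<^sub>R (V *v axis j 1)"
    by (simp add: matrix_vector_mul_assoc[symmetric] matrix_vector_mult_scaleR)
  show "norm (V *v axis j 1) = 1"
    using assms by (simp add: matrix_vector_mult_basis orthogonal_matrix_orthonormal_columns)
qed

lemma pos_def_diagonalised_entry_pos:
  assumes "orthogonal_matrix V" and "pos_def (V ** diag_mat s ** transpose V)"
  shows "0 < s$j"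
proof -
  let ?e = "V *v axis j 1"
  have "norm ?e = 1"
    using diagonalised_eigenvector(2)[OF assms(1)] .
  then have "?e \<noteq> 0" and "?e \<bullet> ?e = 1"
    by (auto simp: norm_eq_1)
  then show ?thesis
    using assms(2) diagonalised_eigenvector(1)[OF assms(1)] by (force simp: pos_def_def)
qed

lemma diagonalised_entry_le_onorm:
  assumes "orthogonal_matrix V"
  shows "s$j \<le> onorm (\<lambda>v. (V ** diag_mat s ** transpose V) *v v)"
proof -
  let ?e = "V *v axis j 1"
  have "\<bar>s$j\<bar> = norm ((V ** diag_mat s ** transpose V) *v ?e)"
    using diagonalised_eigenvector[OF assms] by simp
  also have "\<dots> \<le> onorm (\<lambda>v. (V ** diag_mat s ** transpose V) *v v) * norm ?e"
    by (rule onorm) simp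
  finally show ?thesis
    using diagonalised_eigenvector(2)[OF assms] by simp
qed

subsection \<open>Extreme eigenvalues of a symmetric matrix\<close>

text \<open>If a unit vector v maximises the quadratic form on the sphere, then the residual
  r = A v - \<mu> v is orthogonal to v, and moving from v in direction r raises the quadratic
  form by 2 e |r|^2 to first order, while the constraint only costs order e^2.\<close>
lemma symmetric_maximiser_is_eigenvector:
  fixes A :: "real^'d^'d"
  assumes sym: "transpose A = A" and v1: "v \<bullet> v = 1"
    and max: "\<And>u. u \<bullet> (A *v u) \<le> \<mu> * (u \<bullet> u)" and attained: "v \<bullet> (A *v v) = \<mu>"
  shows "A *v v = \<mu> *\<^sub>R v"
proof (rule ccontr)
  assume "A *v v \<noteq> \<mu> *\<^sub>R v"
  define r where "r = A *v v - \<mu> *\<^sub>R v"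
  define rr where "rr = r \<bullet> r"
  define K where "K = r \<bullet> (A *v r) - \<mu> * rr"
  define e where "e = rr / (\<bar>K\<bar> + 1)"
  have rr_pos: "rr > 0"
    using \<open>A *v v \<noteq> \<mu> *\<^sub>R v\<close> by (simp add: r_def rr_def del: inner_diff_left inner_diff_right)
  have e_pos: "e > 0" and eK: "e * \<bar>K\<bar> < rr"
    using rr_pos by (simp_all add: e_def field_simps)
  have A_self_adjoint: "a \<bullet> (A *v b) = (A *v a) \<bullet> b" for a b
    by (metis inner_transpose_mult_vec sym)
  have vr: "v \<bullet> r = 0"
    using attained v1 by (simp add: r_def inner_diff_right)
  have "A *v v = r + \<mu> *\<^sub>R v"
    by (simp add: r_def)
  then have rAv: "r \<bullet> (A *v v) = rr"
    using vr by (simp add: rr_def inner_add_right inner_commute)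
  have "(v + e *\<^sub>R r) \<bullet> (A *v (v + e *\<^sub>R r)) = \<mu> + 2 * e * rr + e\<^sup>2 * (r \<bullet> (A *v r))"
    using attained rAv A_self_adjoint[of v r]
    by (simp add: algebra_simps inner_add_left inner_add_right power2_eq_square inner_commute)
  moreover have "(v + e *\<^sub>R r) \<bullet> (v + e *\<^sub>R r) = 1 + e\<^sup>2 * rr"
    using v1 vr
    by (simp add: algebra_simps inner_add_left inner_add_right power2_eq_square rr_def inner_commute)
  ultimately have "\<mu> + 2 * e * rr + e\<^sup>2 * (r \<bullet> (A *v r)) \<le> \<mu> * (1 + e\<^sup>2 * rr)"
    using max[of "v + e *\<^sub>R r"] by simp
  then have "e * (2 * rr + e * K) \<le> 0"
    by (simp add: K_def algebra_simps power2_eq_square)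
  then have "2 * rr + e * K \<le> 0"
    using e_pos by (simp add: mult_le_0_iff)
  moreover have "e * (- \<bar>K\<bar>) \<le> e * K"
    using e_pos by (intro mult_left_mono) auto
  ultimately show False
    using eK rr_pos by linarith
qed

lemma symmetric_quadratic_form_le_eigenvalue:
  fixes A :: "real^'d^'d"
  assumes sym: "transpose A = A"
  shows "\<exists>\<mu>\<in>mat_eigenvalues A. \<forall>u. u \<bullet> (A *v u) \<le> \<mu> * (u \<bullet> u)"
proof -
  have "sphere (0::real^'d) 1 \<noteq> {}"
    by (simp add: sphere_eq_empty)
  moreover have "continuous_on (sphere 0 1) (\<lambda>u::real^'d. u \<bullet> (A *v u))"
    by (intro continuous_intros linear_continuous_on) auto
  ultimately obtain v where v: "v \<in> sphere 0 1"
    and v_max: "\<And>u. u \<in> sphere 0 1 \<Longrightarrow> u \<bullet> (A *v u) \<le> v \<bullet> (A *v v)"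
    using continuous_attains_sup[OF compact_sphere] by blast
  define \<mu> where "\<mu> = v \<bullet> (A *v v)"
  have bound: "u \<bullet> (A *v u) \<le> \<mu> * (u \<bullet> u)" for u
  proof (cases "u = 0")
    case False
    let ?v = "(1 / norm u) *\<^sub>R u"
    have "?v \<bullet> (A *v ?v) = (u \<bullet> (A *v u)) / (norm u)\<^sup>2"
      by (simp add: matrix_vector_mult_scaleR power2_eq_square)
    moreover have "?v \<bullet> (A *v ?v) \<le> \<mu>"
      using False v_max[of ?v] by (simp add: \<mu>_def)
    ultimately show ?thesis
      using False by (simp add: dot_square_norm divide_le_eq mult.commute)
  qed simp
  have "v \<bullet> v = 1"
    using v by (simp add: dot_square_norm)
  then have "A *v v = \<mu> *\<^sub>R v"
    using symmetric_maximiser_is_eigenvector[OF sym _ bound] by (simp add: \<mu>_def)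
  moreover have "v \<noteq> 0"
    using v by auto
  ultimately show ?thesis
    using bound unfolding mat_eigenvalues_def by blast
qed

lemma symmetric_quadratic_form_ge_eigenvalue:
  fixes A :: "real^'d^'d"
  assumes sym: "transpose A = A"
  shows "\<exists>\<mu>\<in>mat_eigenvalues A. \<forall>u. \<mu> * (u \<bullet> u) \<le> u \<bullet> (A *v u)"
proof -
  have neg_mult: "(- A) *v u = - (A *v u)" for u :: "real^'d"
    by (simp add: vec_eq_iff matrix_vector_mult_def sum_negf)
  have "transpose (- A) = - A"
    using sym by (simp add: vec_eq_iff transpose_def)
  then obtain \<mu> where \<mu>: "\<mu> \<in> mat_eigenvalues (- A)"
    and bound: "\<And>u. u \<bullet> ((- A) *v u) \<le> \<mu> * (u \<bullet> u)"
    using symmetric_quadratic_form_le_eigenvalue by blast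
  obtain v where "v \<noteq> 0" and "- (A *v v) = \<mu> *\<^sub>R v"
    using \<mu> unfolding mat_eigenvalues_def neg_mult by blast
  then have "A *v v = (- \<mu>) *\<^sub>R v"
    by (metis minus_minus scaleR_minus_left)
  then have "- \<mu> \<in> mat_eigenvalues A"
    using \<open>v \<noteq> 0\<close> unfolding mat_eigenvalues_def by blast
  moreover have "- \<mu> * (u \<bullet> u) \<le> u \<bullet> (A *v u)" for u
    using bound[of u] by (simp add: neg_mult)
  ultimately show ?thesis by blast
qed

text \<open>Eigenvectors of distinct eigenvalues are orthogonal, hence independent.\<close>
lemma symmetric_finite_eigenvalues:
  fixes A :: "real^'d^'d"
  assumes sym: "transpose A = A"
  shows "finite (mat_eigenvalues A)"
proof -
  define ev where "ev \<mu> = (SOME v. v \<noteq> 0 \<and> A *v v = \<mu> *\<^sub>R v)" for \<mu>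
  have ev: "ev \<mu> \<noteq> 0 \<and> A *v ev \<mu> = \<mu> *\<^sub>R ev \<mu>" if "\<mu> \<in> mat_eigenvalues A" for \<mu>
    using that unfolding ev_def mat_eigenvalues_def mem_Collect_eq by (rule someI_ex)
  have inj: "inj_on ev (mat_eigenvalues A)"
    by (rule inj_onI) (metis ev scaleR_cancel_right)
  have "pairwise orthogonal (ev ` mat_eigenvalues A)"
  proof (rule pairwiseI, clarify)
    fix x y assume xy: "x \<in> mat_eigenvalues A" "y \<in> mat_eigenvalues A" "ev x \<noteq> ev y"
    have "x * (ev x \<bullet> ev y) = (A *v ev x) \<bullet> ev y"
      using ev[OF xy(1)] by simp
    also have "\<dots> = ev x \<bullet> (A *v ev y)"
      by (metis inner_transpose_mult_vec sym)
    also have "\<dots> = y * (ev x \<bullet> ev y)"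
      using ev[OF xy(2)] by simp
    finally show "orthogonal (ev x) (ev y)"
      using xy(3) by (auto simp: orthogonal_def)
  qed
  moreover have "0 \<notin> ev ` mat_eigenvalues A"
    using ev by auto
  ultimately have "finite (ev ` mat_eigenvalues A)"
    by (intro independent_imp_finite pairwise_orthogonal_independent)
  then show ?thesis
    using inj finite_imageD by blast
qed

lemma pos_def_eigenvalue_pos:
  assumes "pos_def A" and "\<mu> \<in> mat_eigenvalues A"
  shows "0 < \<mu>"
proof -
  obtain v where "v \<noteq> 0" and "A *v v = \<mu> *\<^sub>R v"
    using assms(2) unfolding mat_eigenvalues_def by blast
  then have "0 < \<mu> * (v \<bullet> v)" and "0 < v \<bullet> v"
    using assms(1) by (auto simp: pos_def_def)
  then show ?thesis
    by (simp add: zero_less_mult_iff)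
qed

lemma pos_def_quadratic_form_cond_number:
  fixes A :: "real^'d^'d"
  assumes sym: "transpose A = A" and pd: "pos_def A"
    and c: "0 \<le> c" and uw: "u \<bullet> u \<le> c * (w \<bullet> w)"
  shows "u \<bullet> (A *v u) \<le> cond_number A * c * (w \<bullet> (A *v w))"
proof -
  let ?E = "mat_eigenvalues A"
  obtain \<mu>max where \<mu>max: "\<mu>max \<in> ?E" "\<And>u. u \<bullet> (A *v u) \<le> \<mu>max * (u \<bullet> u)"
    using symmetric_quadratic_form_le_eigenvalue[OF sym] by blast
  obtain \<mu>min where \<mu>min: "\<mu>min \<in> ?E" "\<And>u. \<mu>min * (u \<bullet> u) \<le> u \<bullet> (A *v u)"
    using symmetric_quadratic_form_ge_eigenvalue[OF sym] by blast
  have fin: "finite ?E"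
    using symmetric_finite_eigenvalues[OF sym] .
  have Min_pos: "0 < Min ?E"
    using fin \<mu>min(1) by (intro pos_def_eigenvalue_pos[OF pd] Min_in) auto
  have Max_ge: "\<mu>max \<le> Max ?E" and Min_le: "Min ?E \<le> \<mu>min" "Min ?E \<le> \<mu>max"
    using fin \<mu>max(1) \<mu>min(1) by simp_all
  have Max_pos: "0 < Max ?E"
    using Min_pos Min_le Max_ge by linarith
  have "u \<bullet> (A *v u) \<le> \<mu>max * (u \<bullet> u)"
    using \<mu>max(2) .
  also have "\<dots> \<le> Max ?E * (u \<bullet> u)"
    using Max_ge by (simp add: mult_right_mono)
  also have "\<dots> \<le> Max ?E * c * (w \<bullet> w)"
    using uw Max_pos by (simp add: mult.assoc)
  also have "Min ?E * (w \<bullet> w) \<le> w \<bullet> (A *v w)"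
    using Min_le(1) \<mu>min(2)[of w] by (meson inner_ge_zero mult_right_mono order_trans)
  then have "Max ?E * c * (w \<bullet> w) \<le> Max ?E * c * ((w \<bullet> (A *v w)) / Min ?E)"
    using Max_pos Min_pos c by (intro mult_left_mono) (simp_all add: le_divide_eq mult.commute)
  finally show ?thesis
    by (simp add: cond_number_def)
qed

lemma integral_inner_square:
  fixes D :: "(real^'d) measure"
  assumes mom: "\<And>i j. integrable D (\<lambda>x. x $ i * x $ j)"
  shows "(\<integral>x. (u \<bullet> x)\<^sup>2 \<partial>D) = u \<bullet> ((\<chi> i j. \<integral>x. x $ i * x $ j \<partial>D) *v u)"
proof -
  have "(\<integral>x. (u \<bullet> x)\<^sup>2 \<partial>D) = (\<integral>x. (\<Sum>i\<in>UNIV. \<Sum>j\<in>UNIV. (u$i * u$j) * (x$i * x$j)) \<partial>D)"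
    by (simp add: inner_vec_def power2_eq_square sum_product mult_ac)
  also have "\<dots> = (\<Sum>i\<in>UNIV. \<Sum>j\<in>UNIV. \<integral>x. (u$i * u$j) * (x$i * x$j) \<partial>D)"
    by (simp add: mom)
  also have "\<dots> = u \<bullet> ((\<chi> i j. \<integral>x. x $ i * x $ j \<partial>D) *v u)"
    by (simp only: integral_mult_right_zero)
      (simp add: inner_vec_def matrix_vector_mult_def sum_distrib_left mult_ac)
  finally show ?thesis .
qed

subsection \<open>Gradient descent and ridge regression in eigen-coordinates\<close>

lemma one_minus_power_bounds:
  fixes x :: real
  assumes "0 \<le> x" and "x \<le> 1"
  shows "real t * x / (1 + real t * x) \<le> 1 - (1 - x) ^ t"
    and "1 - (1 - x) ^ t \<le> 1"
    and "1 - (1 - x) ^ t \<le> real t * x"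
proof -
  have "(1 - x) ^ t * (1 + real t * x) \<le> (1 - x) ^ t * (1 + x) ^ t"
    using assms Bernoulli_inequality[of x t] by (intro mult_left_mono) auto
  also have "\<dots> = (1 - x\<^sup>2) ^ t"
    by (simp add: power_mult_distrib[symmetric] power2_eq_square algebra_simps)
  also have "\<dots> \<le> 1"
    using assms by (intro power_le_one) (auto simp: power2_eq_square mult_le_one)
  finally have "(1 - x) ^ t * (1 + real t * x) \<le> 1" .
  moreover have "0 < 1 + real t * x"
    using assms by (simp add: add_pos_nonneg)
  ultimately have "(1 - x) ^ t \<le> 1 / (1 + real t * x)"
    by (simp add: pos_le_divide_eq)
  moreover have "real t * x / (1 + real t * x) = 1 - 1 / (1 + real t * x)"
    using \<open>0 < 1 + real t * x\<close> by (simp add: field_simps)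
  ultimately show "real t * x / (1 + real t * x) \<le> 1 - (1 - x) ^ t"
    by linarith
  show "1 - (1 - x) ^ t \<le> 1"
    using assms by simp
  show "1 - (1 - x) ^ t \<le> real t * x"
    using assms Bernoulli_inequality[of "- x" t] by simp
qed

lemma shrinkage_ratio_bounds:
  fixes a p :: real
  assumes a: "0 < a" and p_ge: "a / (1 + a) \<le> p" and p_le_1: "p \<le> 1" and p_le_a: "p \<le> a"
  shows "0 \<le> 1 - a / (p * (1 + a))" and "1 - a / (p * (1 + a)) \<le> min (1/2) (1/a)"
proof -
  have "0 < a / (1 + a)"
    using a by simp
  then have p: "0 < p"
    using p_ge by linarith
  show "0 \<le> 1 - a / (p * (1 + a))"
    using a p p_ge by (simp add: field_simps)
  have "a / (1 + a) \<le> a / (p * (1 + a))"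
    using a p p_le_1 by (intro divide_left_mono) (auto simp: mult_le_cancel_right1)
  then have le_inv: "1 - a / (p * (1 + a)) \<le> 1 / (1 + a)"
    using a by (simp add: field_simps)
  also have "\<dots> \<le> 1 / a"
    using a by (simp add: frac_le)
  finally have "1 - a / (p * (1 + a)) \<le> 1 / a" .
  moreover have "1 - a / (p * (1 + a)) \<le> 1 / 2"
  proof (cases "1 \<le> a")
    case True
    then have "1 / (1 + a) \<le> 1 / 2"
      by (intro divide_left_mono) auto
    then show ?thesis
      using le_inv by linarith
  next
    case False
    have "1 \<le> a / p"
      using p p_le_a by simp
    then have "1 / (1 + a) \<le> a / (p * (1 + a))"
      using a divide_right_mono[of 1 "a / p" "1 + a"] by simp
    moreover have "1 / 2 \<le> 1 / (1 + a)"
      using False a by (simp add: frac_le)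
    ultimately show ?thesis
      by linarith
  qed
  ultimately show "1 - a / (p * (1 + a)) \<le> min (1/2) (1/a)"
    by simp
qed

lemma gd_ridge_coordinate_bound:
  fixes \<sigma> \<sigma>min \<eta> b z z' :: real
  assumes \<sigma>min: "0 < \<sigma>min" "\<sigma>min \<le> \<sigma>" and \<eta>: "0 < \<eta>" "\<eta> * \<sigma> \<le> 1" and t: "1 \<le> t"
    and gd: "\<sigma> * z = (1 - (1 - \<eta> * \<sigma>) ^ t) * b"
    and ridge: "(\<sigma> + 1 / (real t * \<eta>)) * z' = b"
  shows "(z - z')\<^sup>2 \<le> min (1/4) (1 / (\<sigma>min\<^sup>2 * (real t)\<^sup>2 * \<eta>\<^sup>2)) * z\<^sup>2"
proof -
  define a where "a = real t * (\<eta> * \<sigma>)"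
  define p where "p = 1 - (1 - \<eta> * \<sigma>) ^ t"
  define r where "r = 1 - a / (p * (1 + a))"
  have a: "0 < a"
    using \<sigma>min \<eta> t by (simp add: a_def)
  have "a / (1 + a) \<le> p" "p \<le> 1" "p \<le> a"
    using one_minus_power_bounds[of "\<eta> * \<sigma>" t] \<sigma>min \<eta> by (simp_all add: a_def p_def)
  note r_bounds = shrinkage_ratio_bounds[OF a this, folded r_def]
  have "0 < a / (1 + a)"
    using a by simp
  then have p: "0 < p"
    using \<open>a / (1 + a) \<le> p\<close> by linarith
  have "(1 + a) * z' = real t * \<eta> * b"
    using ridge \<eta> t by (simp add: a_def field_simps)
  then have "p * (1 + a) * z' = real t * \<eta> * (p * b)"
    by (metis mult.assoc mult.left_commute)
  also have "p * b = \<sigma> * z"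
    using gd by (simp add: p_def)
  finally have "p * (1 + a) * z' = a * z"
    by (simp add: a_def mult_ac)
  then have "z' = a * z / (p * (1 + a))"
    using a p by (simp add: eq_divide_eq mult.commute)
  then have diff: "z - z' = r * z"
    by (simp add: r_def left_diff_distrib)
  have "real t * \<eta> * \<sigma>min \<le> a"
    using \<sigma>min \<eta> t by (simp add: a_def)
  then have "1 / a \<le> 1 / (real t * \<eta> * \<sigma>min)"
    using \<sigma>min \<eta> t a by (intro divide_left_mono) auto
  then have "r\<^sup>2 \<le> (1 / (real t * \<eta> * \<sigma>min))\<^sup>2"
    using r_bounds by (intro power_mono) auto
  moreover have "r\<^sup>2 \<le> (1/2)\<^sup>2"
    using r_bounds by (intro power_mono) auto
  ultimately have "r\<^sup>2 \<le> min (1/4) (1 / (\<sigma>min\<^sup>2 * (real t)\<^sup>2 * \<eta>\<^sup>2))"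
    by (simp add: power_divide power_mult_distrib mult_ac)
  then show ?thesis
    unfolding diff power_mult_distrib by (intro mult_right_mono) auto
qed

lemma gd_iter_eigen_coordinates:
  assumes orth: "orthogonal_matrix V" and eig: "transpose X ** X = V ** diag_mat s ** transpose V"
  shows "s$j * (transpose V *v gd_iter X y \<eta> t)$j
         = (1 - (1 - \<eta> * s$j) ^ t) * (transpose V *v (transpose X *v y))$j"
proof (induction t)
  case (Suc t)
  define w where "w = gd_iter X y \<eta> t"
  define z where "z = (transpose V *v w)$j"
  define b where "b = (transpose V *v (transpose X *v y))$j"
  have "transpose X *v (y - X *v w) = transpose X *v y - (V ** diag_mat s ** transpose V) *v w"
    by (simp add: matrix_vector_mult_diff_distrib matrix_vector_mul_assoc eig[symmetric])
  then have "(transpose V *v gd_iter X y \<eta> (Suc t))$j = z + \<eta> * (b - s$j * z)"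
    using orthogonal_transpose_diagonalised[OF orth]
    by (simp add: w_def z_def b_def matrix_vector_right_distrib matrix_vector_mult_scaleR
        matrix_vector_mult_diff_distrib diag_mat_mult_vec)
  then have "s$j * (transpose V *v gd_iter X y \<eta> (Suc t))$j = s$j * (z + \<eta> * (b - s$j * z))"
    by (simp only:)
  also have "\<dots> = s$j * z + \<eta> * s$j * (b - s$j * z)"
    by (simp add: algebra_simps)
  also have "\<dots> = (1 - (1 - \<eta> * s$j) ^ t) * b + \<eta> * s$j * (b - (1 - (1 - \<eta> * s$j) ^ t) * b)"
    using Suc.IH by (simp only: w_def z_def b_def)
  also have "\<dots> = (1 - (1 - \<eta> * s$j) ^ Suc t) * b"
    by (simp add: algebra_simps)
  finally show ?case
    by (simp add: b_def)
qed simp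

lemma pos_def_add_scaleR_one_invertible:
  fixes A :: "real^'d^'d"
  assumes "pos_def A" and "0 \<le> l"
  shows "invertible (A + l *\<^sub>R mat 1)"
proof -
  have "x = 0" if "(A + l *\<^sub>R mat 1) *v x = 0" for x
  proof (rule ccontr)
    assume "x \<noteq> 0"
    then have "0 < x \<bullet> (A *v x) + l * (x \<bullet> x)"
      using assms by (simp add: pos_def_def add_pos_nonneg)
    also have "\<dots> = x \<bullet> ((A + l *\<^sub>R mat 1) *v x)"
      by (simp add: mat_add_scaleR_one_mult_vec inner_add_right)
    finally show False
      using that by simp
  qed
  then show ?thesis
    by (simp add: invertible_left_inverse matrix_left_invertible_ker)
qed

lemma ridge_eigen_coordinates:
  assumes orth: "orthogonal_matrix V" and eig: "transpose X ** X = V ** diag_mat s ** transpose V"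
    and pd: "pos_def (transpose X ** X)" and l: "0 \<le> l"
  shows "(s$j + l) * (transpose V *v ridge X y l)$j = (transpose V *v (transpose X *v y))$j"
proof -
  let ?M = "transpose X ** X + l *\<^sub>R mat 1"
  have "?M *v ridge X y l = (?M ** matrix_inv ?M) *v (transpose X *v y)"
    unfolding ridge_def by (rule matrix_vector_mul_assoc)
  then have "?M *v ridge X y l = transpose X *v y"
    using matrix_mul_matrix_inv[OF pos_def_add_scaleR_one_invertible[OF pd l]] by simp
  moreover have "transpose V *v (?M *v w) = diag_mat s *v (transpose V *v w) + l *\<^sub>R (transpose V *v w)" for w
    using orthogonal_transpose_diagonalised[OF orth]
    by (simp add: eig mat_add_scaleR_one_mult_vec matrix_vector_right_distrib matrix_vector_mult_scaleR)
  ultimately have "transpose V *v (transpose X *v y)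
      = diag_mat s *v (transpose V *v ridge X y l) + l *\<^sub>R (transpose V *v ridge X y l)"
    by metis
  then show ?thesis
    by (simp add: diag_mat_mult_vec algebra_simps)
qed

lemma gd_ridge_eigen_coordinate_bound:
  assumes orth: "orthogonal_matrix V" and eig: "transpose X ** X = V ** diag_mat s ** transpose V"
    and pd: "pos_def (transpose X ** X)"
    and \<eta>_pos: "0 < \<eta>" and \<eta>_le: "\<eta> \<le> 1 / onorm (\<lambda>v. (transpose X ** X) *v v)"
    and t: "1 \<le> t"
  shows "((transpose V *v (gd_iter X y \<eta> t - ridge X y (1 / (real t * \<eta>))))$j)\<^sup>2
    \<le> min (1/4) (1 / ((Min (range (\<lambda>i. s$i)))\<^sup>2 * (real t)\<^sup>2 * \<eta>\<^sup>2))
      * ((transpose V *v gd_iter X y \<eta> t)$j)\<^sup>2"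
proof -
  have s_pos: "0 < s$i" for i
    using pos_def_diagonalised_entry_pos[OF orth] pd eig by simp
  have s_le: "s$j \<le> onorm (\<lambda>v. (transpose X ** X) *v v)"
    using diagonalised_entry_le_onorm[OF orth] eig by simp
  then have "\<eta> * onorm (\<lambda>v. (transpose X ** X) *v v) \<le> 1"
    using \<eta>_le s_pos[of j] by (simp add: le_divide_eq mult.commute)
  moreover have "\<eta> * s$j \<le> \<eta> * onorm (\<lambda>v. (transpose X ** X) *v v)"
    using s_le \<eta>_pos by simp
  ultimately have \<eta>_s: "\<eta> * s$j \<le> 1"
    by linarith
  have s_min: "0 < Min (range (\<lambda>i. s$i))" "Min (range (\<lambda>i. s$i)) \<le> s$j"
    using s_pos by auto
  have "0 \<le> 1 / (real t * \<eta>)"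
    using \<eta>_pos by simp
  note ridge = ridge_eigen_coordinates[OF orth eig pd this]
  show ?thesis
    unfolding matrix_vector_mult_diff_distrib vector_minus_component
    by (rule gd_ridge_coordinate_bound[OF s_min \<eta>_pos \<eta>_s t gd_iter_eigen_coordinates[OF orth eig] ridge])
qed

theorem proposition2:
  fixes X :: "real ^ 'd ^ 'n" and y :: "real ^ 'n"
    and V :: "real ^ 'd ^ 'd" and s :: "real ^ 'd"
    and \<eta> :: real and t :: nat
    and D :: "(real ^ 'd) measure" and \<Sigma> :: "real ^ 'd ^ 'd"
  assumes V_orth: "orthogonal_matrix V"
    and eig: "transpose X ** X = V ** diag_mat s ** transpose V"
    and XtX_pd: "pos_def (transpose X ** X)"
    and eta_pos: "0 < \<eta>"
    and eta_le: "\<eta> \<le> 1 / onorm (\<lambda>v. (transpose X ** X) *v v)"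
    and t_ge: "t \<ge> 1"
    and D_prob: "prob_space D"
    and D_sets: "sets D = sets borel"
    and D_mom: "\<And>i j. integrable D (\<lambda>x. x $ i * x $ j)"
    and Sigma_def: "\<Sigma> = (\<chi> i j. \<integral>x. x $ i * x $ j \<partial>D)"
    and Sigma_pd: "pos_def \<Sigma>"
  shows
    "let w = gd_iter X y \<eta> t;
         lam = 1 / (real t * \<eta>);
         w' = ridge X y lam;
         s_min = Min (range (\<lambda>i. s $ i));
         c = min (1/4) (1 / (s_min\<^sup>2 * (real t)\<^sup>2 * \<eta>\<^sup>2))
     in (\<Sum>i\<in>UNIV. (w \<bullet> X $ i - w' \<bullet> X $ i)\<^sup>2) \<le> c * (\<Sum>i\<in>UNIV. (w \<bullet> X $ i)\<^sup>2)
      \<and> (\<integral>x. (w \<bullet> x - w' \<bullet> x)\<^sup>2 \<partial>D)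
          \<le> cond_number \<Sigma> * c * (\<integral>x. (w \<bullet> x)\<^sup>2 \<partial>D)"
proof -
  define w where "w = gd_iter X y \<eta> t"
  define w' where "w' = ridge X y (1 / (real t * \<eta>))"
  define c where "c = min (1/4) (1 / ((Min (range (\<lambda>i. s$i)))\<^sup>2 * (real t)\<^sup>2 * \<eta>\<^sup>2))"
  have coord: "((transpose V *v (w - w'))$j)\<^sup>2 \<le> c * ((transpose V *v w)$j)\<^sup>2" for j
    unfolding w_def w'_def c_def
    using gd_ridge_eigen_coordinate_bound[OF V_orth eig XtX_pd eta_pos eta_le t_ge] .
  have "0 \<le> s$j" for j
    using pos_def_diagonalised_entry_pos[OF V_orth] XtX_pd eig by (simp add: less_imp_le)
  then have "(w - w') \<bullet> ((transpose X ** X) *v (w - w')) \<le> c * (w \<bullet> ((transpose X ** X) *v w))"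
    unfolding eig using coord by (rule diagonalised_quadratic_form_mono)
  then have in_sample: "(\<Sum>i\<in>UNIV. (w \<bullet> X $ i - w' \<bullet> X $ i)\<^sup>2) \<le> c * (\<Sum>i\<in>UNIV. (w \<bullet> X $ i)\<^sup>2)"
    by (simp add: sum_sq_inner_rows inner_diff_left[symmetric])
  have "transpose \<Sigma> = \<Sigma>"
    by (simp add: Sigma_def transpose_def vec_eq_iff mult.commute)
  moreover have "0 \<le> c"
    by (simp add: c_def)
  ultimately have "(w - w') \<bullet> (\<Sigma> *v (w - w')) \<le> cond_number \<Sigma> * c * (w \<bullet> (\<Sigma> *v w))"
    using Sigma_pd orthogonal_norm_sq_mono[OF V_orth coord] pos_def_quadratic_form_cond_number by blast
  then have population: "(\<integral>x. (w \<bullet> x - w' \<bullet> x)\<^sup>2 \<partial>D) \<le> cond_number \<Sigma> * c * (\<integral>x. (w \<bullet> x)\<^sup>2 \<partial>D)"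
    by (simp add: integral_inner_square[OF D_mom] Sigma_def inner_diff_left[symmetric])
  show ?thesis
    using in_sample population by (simp add: Let_def w_def w'_def c_def)
qed

end
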